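(* Let $(X,d)$ be a compact metric space, $\mathbb{F}=\{f_n:n\in\mathbb{N}\}$ a sequence of continuous surjective self-maps of $X$, $k\in\mathbb{N}$ and $x,y\in X$. If $\mathbb{F}$ is commutative, then: if $(x,y)$ is proximal for $(X,\mathbb{F}_k)$, then $(x,y)$ is proximal for $(X,\mathbb{F})$. Further, if $\mathbb{F}$ is commutative and each $f_i$ is bijective, then: if $(x,y)$ is proximal for $(X,\mathbb{F})$, then $(x,y)$ is proximal for $(X,\mathbb{F}_k)$.
   Context: Write $\omega_n=f_n\circ\cdots\circ f_1$ and, for $n>k$, $\omega^k_n=f_n\circ\cdots\circ f_{k+1}$; $\mathbb{F}_k=\{f_n:n\ge k+1\}$ is the truncated family. $\mathbb{F}$ is commutative if $f_i\circ f_j=f_j\circ f_i$ for all $i,j$. A pair $(x,y)$ is proximal for $(X,\mathbb{F})$ if $\liminf_{n\to\infty}d(\omega_n(x),\omega_n(y))=0$, and proximal for $(X,\mathbb{F}_k)$ if $\liminf_{n\to\infty}d(\omega^k_n(x),\omega^k_n(y))=0$. *)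

theory Defs
  imports "HOL-Analysis.Analysis" "HOL-Library.Liminf_Limsup"
begin

text \<open>The family is indexed by positive naturals: f 1, f 2, ... (the value f 0 is irrelevant).
  omega f n = f n o ... o f 1 (omega f 0 = id).\<close>
fun omega :: "(nat \<Rightarrow> 'a \<Rightarrow> 'a) \<Rightarrow> nat \<Rightarrow> 'a \<Rightarrow> 'a" where
  "omega f 0 = id"
| "omega f (Suc n) = f (Suc n) \<circ> omega f n"

fun omega_from :: "(nat \<Rightarrow> 'a \<Rightarrow> 'a) \<Rightarrow> nat \<Rightarrow> nat \<Rightarrow> 'a \<Rightarrow> 'a" where
  "omega_from f k 0 = id"
| "omega_from f k (Suc n) = (if Suc n \<le> k then id else f (Suc n) \<circ> omega_from f k n)"

definition commutative_family :: "'a set \<Rightarrow> (nat \<Rightarrow> 'a \<Rightarrow> 'a) \<Rightarrow> bool" where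
  "commutative_family X f \<longleftrightarrow> (\<forall>i\<ge>1. \<forall>j\<ge>1. \<forall>z\<in>X. f i (f j z) = f j (f i z))"

definition proximal :: "(nat \<Rightarrow> 'a::metric_space \<Rightarrow> 'a) \<Rightarrow> 'a \<Rightarrow> 'a \<Rightarrow> bool" where
  "proximal f x y \<longleftrightarrow>
     liminf (\<lambda>n. ereal (dist (omega f n x) (omega f n y))) = 0"

definition proximal_trunc :: "(nat \<Rightarrow> 'a::metric_space \<Rightarrow> 'a) \<Rightarrow> nat \<Rightarrow> 'a \<Rightarrow> 'a \<Rightarrow> bool" where
  "proximal_trunc f k x y \<longleftrightarrow>
     liminf (\<lambda>n. ereal (dist (omega_from f k n x) (omega_from f k n y))) = 0"

end

theory Submission
  imports Defs
begin

text \<open>For a commutative family, \<open>\<omega>\<^sub>n = \<omega>\<^sub>k \<circ> \<omega>\<^sup>k\<^sub>n\<close> whenever \<open>n \<ge> k\<close>: from time \<open>k\<close> on,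
  the orbits of the full family are the images of the orbits of the truncated family under
  the single map \<open>\<omega>\<^sub>k\<close>. On the compact space \<open>X\<close> this map is uniformly continuous, so it
  sends pairs of orbits that come arbitrarily close to pairs of orbits that come arbitrarily
  close. If every \<open>f\<^sub>i\<close> is bijective, \<open>\<omega>\<^sub>k\<close> is a continuous bijection of a compact space,
  so its inverse is uniformly continuous as well and transfers proximality back.\<close>

lemma Liminf_ereal_eq_0_iff_frequently:
  fixes u :: "'a \<Rightarrow> real"
  assumes nonneg: "\<And>n. 0 \<le> u n"
  shows "Liminf F (\<lambda>n. ereal (u n)) = 0 \<longleftrightarrow> (\<forall>e>0. \<exists>\<^sub>F n in F. u n < e)"
proof
  assume lim: "Liminf F (\<lambda>n. ereal (u n)) = 0"
  show "\<forall>e>0. \<exists>\<^sub>F n in F. u n < e"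
  proof (intro allI impI)
    fix e :: real
    assume "0 < e"
    show "\<exists>\<^sub>F n in F. u n < e"
    proof (rule ccontr)
      assume "\<not> (\<exists>\<^sub>F n in F. u n < e)"
      then have "\<forall>\<^sub>F n in F. ereal e \<le> ereal (u n)"
        by (simp add: not_frequently not_less)
      then have "ereal e \<le> Liminf F (\<lambda>n. ereal (u n))"
        by (rule Liminf_bounded)
      with lim \<open>0 < e\<close> show False
        by simp
    qed
  qed
next
  assume close: "\<forall>e>0. \<exists>\<^sub>F n in F. u n < e"
  have "0 \<le> Liminf F (\<lambda>n. ereal (u n))"
    using nonneg by (intro Liminf_bounded always_eventually) simp
  moreover have "\<not> 0 < Liminf F (\<lambda>n. ereal (u n))"
  proof
    assume "0 < Liminf F (\<lambda>n. ereal (u n))"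
    then obtain r where r: "0 < ereal r" "ereal r < Liminf F (\<lambda>n. ereal (u n))"
      using ereal_dense2 by blast
    from less_LiminfD[OF r(2)] have "\<forall>\<^sub>F n in F. \<not> u n < r"
      by (rule eventually_mono) simp
    moreover have "\<exists>\<^sub>F n in F. u n < r"
      using close r(1) by simp
    ultimately show False
      by (simp add: frequently_def)
  qed
  ultimately show "Liminf F (\<lambda>n. ereal (u n)) = 0"
    by simp
qed

lemma proximal_iff_frequently_dist_less:
  "proximal f x y \<longleftrightarrow> (\<forall>e>0. \<exists>\<^sub>F n in sequentially. dist (omega f n x) (omega f n y) < e)"
  unfolding proximal_def by (simp add: Liminf_ereal_eq_0_iff_frequently)

lemma proximal_trunc_iff_frequently_dist_less:
  "proximal_trunc f k x y \<longleftrightarrow>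
     (\<forall>e>0. \<exists>\<^sub>F n in sequentially. dist (omega_from f k n x) (omega_from f k n y) < e)"
  unfolding proximal_trunc_def by (simp add: Liminf_ereal_eq_0_iff_frequently)

lemma frequently_dist_less_uniformly_continuous_image:
  fixes g :: "'a::metric_space \<Rightarrow> 'b::metric_space"
  assumes "uniformly_continuous_on X g"
    and "\<And>n. a n \<in> X" and "\<And>n. b n \<in> X"
    and "\<forall>\<^sub>F n in F. a' n = g (a n) \<and> b' n = g (b n)"
    and "\<forall>e>0. \<exists>\<^sub>F n in F. dist (a n) (b n) < e"
  shows "\<forall>e>0. \<exists>\<^sub>F n in F. dist (a' n) (b' n) < e"
proof (intro allI impI)
  fix e :: real
  assume "0 < e"
  then obtain d where "0 < d"
    and d: "\<And>x y. x \<in> X \<Longrightarrow> y \<in> X \<Longrightarrow> dist y x < d \<Longrightarrow> dist (g y) (g x) < e"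
    using assms(1) unfolding uniformly_continuous_on_def by metis
  from assms(5) \<open>0 < d\<close> have "\<exists>\<^sub>F n in F. dist (a n) (b n) < d"
    by simp
  from frequently_eventually_conj[OF this assms(4)]
  show "\<exists>\<^sub>F n in F. dist (a' n) (b' n) < e"
    by (rule frequently_elim1) (use d assms(2,3) in \<open>auto simp: dist_commute\<close>)
qed

lemma uniformly_continuous_on_the_inv_into:
  fixes h :: "'a::metric_space \<Rightarrow> 'b::metric_space"
  assumes "compact X" and "continuous_on X h" and "inj_on h X"
  shows "uniformly_continuous_on (h ` X) (the_inv_into X h)"
proof (rule compact_uniformly_continuous)
  show "continuous_on (h ` X) (the_inv_into X h)"
    using assms by (intro continuous_on_inv) (auto simp: the_inv_into_f_f)
  show "compact (h ` X)"
    using compact_continuous_image[OF assms(2,1)] .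
qed

context
  fixes X :: "'a::topological_space set" and f :: "nat \<Rightarrow> 'a \<Rightarrow> 'a"
  assumes maps_into: "\<And>n. f (Suc n) ` X \<subseteq> X"
begin

lemma omega_mem: "z \<in> X \<Longrightarrow> omega f n z \<in> X"
  by (induction n) (use maps_into in auto)

lemma omega_from_mem: "z \<in> X \<Longrightarrow> omega_from f k n z \<in> X"
  by (induction n) (use maps_into in auto)

lemma omega_from_eq_id: "n \<le> k \<Longrightarrow> omega_from f k n = id"
  by (induction n) auto

lemma omega_commute:
  assumes "commutative_family X f" and "j \<ge> 1" and "z \<in> X"
  shows "f j (omega f n z) = omega f n (f j z)"
  using assms(3)
proof (induction n arbitrary: z)
  case (Suc n)
  have "f j (omega f (Suc n) z) = f (Suc n) (f j (omega f n z))"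
    using assms(1,2) omega_mem[OF Suc.prems] unfolding commutative_family_def by simp
  also have "\<dots> = omega f (Suc n) (f j z)"
    using Suc by simp
  finally show ?case .
qed simp

lemma omega_eq_omega_omega_from:
  assumes "commutative_family X f" and "z \<in> X" and "k \<le> n"
  shows "omega f n z = omega f k (omega_from f k n z)"
  using assms(3)
proof (induction n)
  case (Suc n)
  show ?case
  proof (cases "Suc n \<le> k")
    case True
    with Suc.prems have "k = Suc n"
      by simp
    then show ?thesis
      using omega_from_eq_id[of "Suc n" k] by simp
  next
    case False
    then have "omega f (Suc n) z = f (Suc n) (omega f k (omega_from f k n z))"
      using Suc.IH by simp
    also have "\<dots> = omega f k (f (Suc n) (omega_from f k n z))"
      using omega_commute[OF assms(1) _ omega_from_mem[OF assms(2)]] by simp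
    also have "\<dots> = omega f k (omega_from f k (Suc n) z)"
      using False by simp
    finally show ?thesis .
  qed
qed simp

lemma eventually_omega_eq_omega_omega_from:
  assumes "commutative_family X f" and "z \<in> X"
  shows "\<forall>\<^sub>F n in sequentially. omega f n z = omega f k (omega_from f k n z)"
  using eventually_ge_at_top[of k] by eventually_elim (rule omega_eq_omega_omega_from[OF assms])

lemma continuous_on_omega:
  assumes "\<And>n. continuous_on X (f (Suc n))"
  shows "continuous_on X (omega f n)"
proof (induction n)
  case (Suc n)
  have "continuous_on X (\<lambda>z. f (Suc n) (omega f n z))"
    by (rule continuous_on_compose2[OF assms Suc.IH]) (use omega_mem in auto)
  then show ?case
    by (simp add: comp_def)
qed (simp add: continuous_on_id)

end

lemma bij_betw_omega:
  assumes "\<And>n. bij_betw (f (Suc n)) X X"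
  shows "bij_betw (omega f n) X X"
proof (induction n)
  case (Suc n)
  have "bij_betw (f (Suc n) \<circ> omega f n) X X"
    by (rule bij_betw_trans[OF Suc.IH]) (use assms in simp)
  then show ?case
    by (simp add: comp_def)
qed (simp add: bij_betw_def)

lemma proximal_trunc_imp_proximal:
  fixes X :: "'a::metric_space set"
  assumes "compact X"
    and "\<And>n. continuous_on X (f (Suc n))"
    and "\<And>n. f (Suc n) ` X \<subseteq> X"
    and "commutative_family X f" and "x \<in> X" and "y \<in> X"
    and "proximal_trunc f k x y"
  shows "proximal f x y"
proof -
  have "uniformly_continuous_on X (omega f k)"
    using continuous_on_omega[where f=f, OF assms(3,2)] assms(1)
    by (rule compact_uniformly_continuous)
  from frequently_dist_less_uniformly_continuous_image[OF this
      omega_from_mem[where f=f, OF assms(3,5)] omega_from_mem[where f=f, OF assms(3,6)]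
      eventually_conj[OF eventually_omega_eq_omega_omega_from[where f=f, OF assms(3,4,5)]
        eventually_omega_eq_omega_omega_from[where f=f, OF assms(3,4,6)]]]
  show ?thesis
    using assms(7)
    by (simp add: proximal_iff_frequently_dist_less proximal_trunc_iff_frequently_dist_less)
qed

lemma proximal_imp_proximal_trunc:
  fixes X :: "'a::metric_space set"
  assumes "compact X"
    and "\<And>n. continuous_on X (f (Suc n))"
    and "\<And>n. bij_betw (f (Suc n)) X X"
    and "commutative_family X f" and "x \<in> X" and "y \<in> X"
    and "proximal f x y"
  shows "proximal_trunc f k x y"
proof -
  have maps_into: "\<And>n. f (Suc n) ` X \<subseteq> X"
    using assms(3) by (simp add: bij_betw_def)
  from bij_betw_omega[where f=f, OF assms(3)]
  have inj: "inj_on (omega f k) X" and "omega f k ` X = X"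
    by (simp_all add: bij_betw_def)
  with uniformly_continuous_on_the_inv_into[OF assms(1)
      continuous_on_omega[where f=f and n=k, OF maps_into assms(2)]]
  have uc_inv: "uniformly_continuous_on X (the_inv_into X (omega f k))"
    by simp
  have inv_split: "\<forall>\<^sub>F n in sequentially.
      omega_from f k n z = the_inv_into X (omega f k) (omega f n z)" if "z \<in> X" for z
    using eventually_omega_eq_omega_omega_from[where f=f and k=k, OF maps_into assms(4) that]
    by eventually_elim
      (simp add: the_inv_into_f_f[OF inj] omega_from_mem[where f=f, OF maps_into that])
  from frequently_dist_less_uniformly_continuous_image[OF uc_inv
      omega_mem[where f=f, OF maps_into assms(5)] omega_mem[where f=f, OF maps_into assms(6)]
      eventually_conj[OF inv_split[OF assms(5)] inv_split[OF assms(6)]]]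
  show ?thesis
    using assms(7)
    by (simp add: proximal_iff_frequently_dist_less proximal_trunc_iff_frequently_dist_less)
qed

theorem mainTheorem3:
  fixes X :: "'a::metric_space set" and f :: "nat \<Rightarrow> 'a \<Rightarrow> 'a" and k :: nat and x y :: 'a
  assumes "compact X"
    and "\<And>n. n \<ge> 1 \<Longrightarrow> continuous_on X (f n)"
    and "\<And>n. n \<ge> 1 \<Longrightarrow> f n ` X = X"
    and "x \<in> X" and "y \<in> X"
  shows "(commutative_family X f \<longrightarrow> proximal_trunc f k x y \<longrightarrow> proximal f x y)
       \<and> (commutative_family X f \<and> (\<forall>n\<ge>1. bij_betw (f n) X X)
            \<longrightarrow> proximal f x y \<longrightarrow> proximal_trunc f k x y)"
proof -
  have cont: "\<And>n. continuous_on X (f (Suc n))" and maps_into: "\<And>n. f (Suc n) ` X \<subseteq> X"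
    using assms(2,3) by simp_all
  have bij: "bij_betw (f (Suc n)) X X" if "\<forall>n\<ge>1. bij_betw (f n) X X" for n
    using that by simp
  show ?thesis
    using proximal_trunc_imp_proximal[where f=f, OF assms(1) cont maps_into _ assms(4,5)]
      proximal_imp_proximal_trunc[where f=f, OF assms(1) cont bij _ assms(4,5)]
    by blast
qed

end
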